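(* Let $E\in\mathbb R$ and $\rho:[0,\infty)\to[0,\infty)$ with $\sum_{n\in\mathfrak T}\rho(|n|)^2<\infty$. (a) Suppose the subgroup $\{\xi(m):m\in\mathfrak T\}\subset\mathbb R$ is dense. If $E-H_{k_0}$ is invertible for some $k_0\in\mathbb R$, then $E-H_k$ is invertible for every $k\in\mathbb R$. If moreover $|(E-H_{k_0})^{-1}(m,n)|\le\rho(|m-n|)$ for all $m,n$, then $|(E-H_k)^{-1}(m,n)|\le\rho(|m-n|)$ for all $k,m,n$. (b) Suppose the subgroup is discrete, i.e. $2\tau_0:=\inf_{m\in\mathfrak T\setminus\{0\}}|\xi(m)|>0$. Let $m_0\in\mathfrak T$, $k_{m_0}=-\xi(m_0)/2$, $\mathcal J(m_0)=(k_{m_0}-\tau_0,k_{m_0}+\tau_0]$. If $E-H_k$ is invertible for every $k\in\mathcal J(m_0)$, then $E-H_k$ is invertible for every $k\in\mathbb R$. If moreover $|(E-H_k)^{-1}(m,n)|\le\rho(|m-n|)$ for all $m,n$ and all $k\in\mathcal J(m_0)$, then this bound holds for all $k\in\mathbb R$ and all $m,n$.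
   Context: $(\mathfrak T,+)$ is an Abelian group with $|\cdot|:\mathfrak T\to[0,\infty)$, $|m|=0$ iff $m=0$, $|m+n|\le|m|+|n|$, $|B(R)|\le CR^\nu$ for $R\ge1$ ($B(R)=\{m:|m|\le R\}$, $C,\nu>1$). $\xi:\mathfrak T\to\mathbb R$ is additive. $c:\mathfrak T\to\mathbb C$ satisfies $|c(n)|\le\exp(-\kappa_0|n|^{\alpha_0})$ ($0<\kappa_0,\alpha_0\le1$) and $c(-n)=\overline{c(n)}$. Fix $\lambda>0$, $\varepsilon\in\mathbb R$. For $k\in\mathbb R$, $H_k$ is the self-adjoint operator on $\ell^2(\mathfrak T)$ given by the matrix $H_k(n,n)=\lambda^{-1}(\xi(n)+k)^2$, $H_k(n,m)=\varepsilon\lambda^{-1}c(n-m)$ for $m\ne n$, with domain $\{f:\sum_n(\xi(n)+k)^4|f(n)|^2<\infty\}$ (the off-diagonal part is bounded). $(E-H_k)^{-1}(m,n)$ denotes the matrix elements of the inverse in the standard basis. *)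

theory Defs
  imports "HOL-Analysis.Analysis"
begin

definition l2 :: "('a \<Rightarrow> complex) set" where
  "l2 = {f. (\<lambda>n. (norm (f n))^2) summable_on UNIV}"

definition l2norm :: "('a \<Rightarrow> complex) \<Rightarrow> real" where
  "l2norm f = sqrt (\<Sum>\<^sub>\<infinity>n. (norm (f n))^2)"

definition Hdom :: "('a \<Rightarrow> real) \<Rightarrow> real \<Rightarrow> ('a \<Rightarrow> complex) set" where
  "Hdom xi k = {f \<in> l2. (\<lambda>n. (xi n + k)^4 * (norm (f n))^2) summable_on UNIV}"

definition Hop :: "real \<Rightarrow> real \<Rightarrow> ('a::ab_group_add \<Rightarrow> complex) \<Rightarrow> ('a \<Rightarrow> real) \<Rightarrow> real
    \<Rightarrow> ('a \<Rightarrow> complex) \<Rightarrow> ('a \<Rightarrow> complex)" where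
  "Hop lam eps c xi k f = (\<lambda>n. complex_of_real ((xi n + k)^2 / lam) * f n
      + complex_of_real (eps / lam) * (\<Sum>\<^sub>\<infinity>m\<in>UNIV - {n}. c (n - m) * f m))"

definition delta :: "'a \<Rightarrow> 'a \<Rightarrow> complex" where
  "delta n = (\<lambda>m. if m = n then 1 else 0)"

definition is_inverse_of_EmH ::
  "real \<Rightarrow> real \<Rightarrow> ('a::ab_group_add \<Rightarrow> complex) \<Rightarrow> ('a \<Rightarrow> real) \<Rightarrow> real \<Rightarrow> real
     \<Rightarrow> (('a \<Rightarrow> complex) \<Rightarrow> ('a \<Rightarrow> complex)) \<Rightarrow> bool" where
  "is_inverse_of_EmH lam eps c xi E k G \<longleftrightarrow>
     (\<forall>f\<in>l2. G f \<in> Hdom xi k \<and>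
        (\<lambda>n. complex_of_real E * G f n - Hop lam eps c xi k (G f) n) = f) \<and>
     (\<forall>g\<in>Hdom xi k. G (\<lambda>n. complex_of_real E * g n - Hop lam eps c xi k g n) = g) \<and>
     (\<exists>B. \<forall>f\<in>l2. l2norm (G f) \<le> B * l2norm f)"

definition EmH_invertible ::
  "real \<Rightarrow> real \<Rightarrow> ('a::ab_group_add \<Rightarrow> complex) \<Rightarrow> ('a \<Rightarrow> real) \<Rightarrow> real \<Rightarrow> real \<Rightarrow> bool" where
  "EmH_invertible lam eps c xi E k \<longleftrightarrow> (\<exists>G. is_inverse_of_EmH lam eps c xi E k G)"

definition inv_bound ::
  "('a::ab_group_add \<Rightarrow> real) \<Rightarrow> (real \<Rightarrow> real) \<Rightarrow> (('a \<Rightarrow> complex) \<Rightarrow> ('a \<Rightarrow> complex)) \<Rightarrow> bool" where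
  "inv_bound nrm rho G \<longleftrightarrow> (\<forall>m n. norm (G (delta n) m) \<le> rho (nrm (m - n)))"

end

theory Submission
  imports Defs "HOL-Real_Asymp.Real_Asymp"
begin

text \<open>Translation by \<open>p\<close> conjugates \<open>H\<^sub>k\<close> into \<open>H\<^sub>k\<^sub>+\<^sub>\<xi>\<^sub>(\<^sub>p\<^sub>)\<close>, so invertibility of
  \<open>E - H\<^sub>k\<close> and translation-invariant bounds on the matrix elements of its inverse only depend
  on \<open>k\<close> modulo the subgroup \<open>\<xi>(\<T>)\<close>. On the other hand \<open>H\<^sub>k - H\<^sub>k\<^sub>'\<close> is multiplication by
  \<open>((\<xi> n + k)\<^sup>2 - (\<xi> n + k')\<^sup>2) / \<lambda>\<close>, which is relatively bounded with respect to \<open>E - H\<^sub>k\<^sub>'\<close>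
  with relative bound \<open>O(\<bar>k - k'\<bar>)\<close>. A contraction argument therefore makes \<open>E - H\<^sub>k\<close> invertible
  for all \<open>k\<close> within a distance of \<open>k'\<close> that only depends on the norm of the inverse at \<open>k'\<close>, and
  the resolvent identity shows that the matrix elements of the inverses converge as \<open>k \<rightarrow> k'\<close>.
  If \<open>\<xi>(\<T>)\<close> is dense, every \<open>k\<close> is a limit of translates \<open>k\<^sub>0 + \<xi>(p)\<close>, which gives (a). If it
  is discrete, the infimum \<open>2\<tau>\<^sub>0\<close> is attained, so \<open>\<xi>(\<T>) \<supseteq> 2\<tau>\<^sub>0 \<int>\<close> and every \<open>k\<close> has a translate in the
  window \<open>\<J>(m\<^sub>0)\<close> of length \<open>2\<tau>\<^sub>0\<close>, which gives (b).\<close>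

section \<open>Square-summable functions\<close>

lemma l2_if_L2_set_bounded:
  assumes "\<And>F. finite F \<Longrightarrow> L2_set (\<lambda>n. norm (f n)) F \<le> A"
  shows "f \<in> l2" and "l2norm f \<le> A"
proof -
  have "A \<ge> 0" using assms[of "{}"] by simp
  have sum_le: "(\<Sum>n\<in>F. (norm (f n))^2) \<le> A^2" if "finite F" for F
    using sqrt_le_D[OF assms[OF that, unfolded L2_set_def]] .
  have summable: "(\<lambda>n. (norm (f n))^2) summable_on UNIV"
    by (rule nonneg_bdd_above_summable_on) (auto intro!: bdd_aboveI2 sum_le)
  then show "f \<in> l2" unfolding l2_def by simp
  have "(\<Sum>\<^sub>\<infinity>n. (norm (f n))^2) \<le> A^2"
    by (rule infsum_le_finite_sums[OF summable]) (use sum_le in auto)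
  from real_sqrt_le_mono[OF this] \<open>A \<ge> 0\<close> show "l2norm f \<le> A" unfolding l2norm_def by simp
qed

lemma L2_set_le_l2norm:
  assumes "f \<in> l2" "finite F"
  shows "L2_set (\<lambda>n. norm (f n)) F \<le> l2norm f"
proof -
  have "(\<Sum>n\<in>F. (norm (f n))^2) \<le> (\<Sum>\<^sub>\<infinity>n. (norm (f n))^2)"
    by (rule finite_sum_le_infsum) (use assms in \<open>auto simp: l2_def\<close>)
  then show ?thesis unfolding l2norm_def L2_set_def by (rule real_sqrt_le_mono)
qed

lemma l2norm_nonneg: "l2norm f \<ge> 0"
  unfolding l2norm_def by (simp add: infsum_nonneg)

lemma norm_le_l2norm: "f \<in> l2 \<Longrightarrow> norm (f n) \<le> l2norm f"
  using L2_set_le_l2norm[of f "{n}"] by simp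

lemma l2norm_le_0_imp_zero:
  assumes "f \<in> l2" "l2norm f \<le> 0" shows "f = (\<lambda>n. 0)"
proof
  show "f n = 0" for n
    using norm_le_l2norm[OF assms(1), of n] assms(2) by (metis norm_le_zero_iff order_trans)
qed

lemma l2_dominated:
  assumes "f \<in> l2" "h \<in> l2" "a \<ge> 0" "b \<ge> 0"
    and "\<And>n. norm (g n) \<le> a * norm (f n) + b * norm (h n)"
  shows "g \<in> l2" and "l2norm g \<le> a * l2norm f + b * l2norm h"
proof -
  have "L2_set (\<lambda>n. norm (g n)) F \<le> a * l2norm f + b * l2norm h" if "finite F" for F
  proof -
    have "L2_set (\<lambda>n. norm (g n)) F \<le> L2_set (\<lambda>n. a * norm (f n) + b * norm (h n)) F"
      by (rule L2_set_mono) (use assms in auto)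
    also have "\<dots> \<le> L2_set (\<lambda>n. a * norm (f n)) F + L2_set (\<lambda>n. b * norm (h n)) F"
      by (rule L2_set_triangle_ineq)
    also have "\<dots> = a * L2_set (\<lambda>n. norm (f n)) F + b * L2_set (\<lambda>n. norm (h n)) F"
      using assms by (simp add: L2_set_right_distrib)
    also have "\<dots> \<le> a * l2norm f + b * l2norm h"
      using assms L2_set_le_l2norm that by (intro add_mono mult_left_mono) auto
    finally show ?thesis .
  qed
  then show "g \<in> l2" "l2norm g \<le> a * l2norm f + b * l2norm h"
    using l2_if_L2_set_bounded by blast+
qed

lemma l2_add:
  assumes "f \<in> l2" "g \<in> l2"
  shows "(\<lambda>n. f n + g n) \<in> l2" and "l2norm (\<lambda>n. f n + g n) \<le> l2norm f + l2norm g"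
  using l2_dominated[OF assms, of 1 1 "\<lambda>n. f n + g n"] by (auto simp: norm_triangle_ineq)

lemma l2_diff:
  assumes "f \<in> l2" "g \<in> l2"
  shows "(\<lambda>n. f n - g n) \<in> l2" and "l2norm (\<lambda>n. f n - g n) \<le> l2norm f + l2norm g"
  using l2_dominated[OF assms, of 1 1 "\<lambda>n. f n - g n"] by (auto simp: norm_triangle_ineq4)

lemma l2_scaleR:
  assumes "f \<in> l2"
  shows "(\<lambda>n. r *\<^sub>R f n) \<in> l2" and "l2norm (\<lambda>n. r *\<^sub>R f n) \<le> \<bar>r\<bar> * l2norm f"
  using l2_dominated[OF assms assms, of "\<bar>r\<bar>" 0 "\<lambda>n. r *\<^sub>R f n"] by auto

lemma l2norm_diff_commute: "l2norm (\<lambda>n. f n - g n) = l2norm (\<lambda>n. g n - f n)"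
  unfolding l2norm_def by (simp add: norm_minus_commute)

lemma l2norm_diff_triangle:
  assumes "f \<in> l2" "g \<in> l2" "h \<in> l2"
  shows "l2norm (\<lambda>n. f n - h n) \<le> l2norm (\<lambda>n. f n - g n) + l2norm (\<lambda>n. g n - h n)"
  using l2_add(2)[OF l2_diff(1)[OF assms(1,2)] l2_diff(1)[OF assms(2,3)]] by simp

lemma zero_in_l2: "(\<lambda>n. 0) \<in> l2" and l2norm_zero: "l2norm (\<lambda>n. 0) = 0"
  by (simp_all add: l2_def l2norm_def)

lemma delta_in_l2: "delta n \<in> l2"
proof (rule l2_if_L2_set_bounded(1))
  fix F :: "'a set" assume "finite F"
  have "(\<Sum>m\<in>F. (norm (delta n m))^2) = (\<Sum>m\<in>F. if m = n then 1 else 0)"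
    unfolding delta_def by (rule sum.cong) auto
  with \<open>finite F\<close> have "(\<Sum>m\<in>F. (norm (delta n m))^2) \<le> 1"
    by simp
  then show "L2_set (\<lambda>m. norm (delta n m)) F \<le> 1" unfolding L2_set_def by simp
qed

section \<open>Fixed points of contractions on square-summable functions\<close>

lemma l2norm_geometric_tail:
  assumes U: "\<And>j. U j \<in> l2" and q: "0 \<le> q" "q < 1"
    and step: "\<And>j. l2norm (\<lambda>n. U (Suc j) n - U j n) \<le> q^j * A"
  shows "l2norm (\<lambda>n. U (j + m) n - U j n) \<le> q^j * A / (1 - q)"
proof -
  have "A \<ge> 0" using order_trans[OF l2norm_nonneg step[of 0]] by simp
  have "l2norm (\<lambda>n. U (j + m) n - U j n) \<le> q^j * A * (1 - q^m) / (1 - q)"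
  proof (induction m)
    case 0
    then show ?case by (simp add: l2norm_zero)
  next
    case (Suc m)
    have "l2norm (\<lambda>n. U (j + Suc m) n - U j n)
        \<le> l2norm (\<lambda>n. U (Suc (j + m)) n - U (j + m) n) + l2norm (\<lambda>n. U (j + m) n - U j n)"
      using l2norm_diff_triangle[OF U U U] by simp
    also have "\<dots> \<le> q^(j + m) * A + q^j * A * (1 - q^m) / (1 - q)"
      by (intro add_mono step Suc)
    also have "\<dots> = q^j * A * (1 - q^Suc m) / (1 - q)"
      using q by (simp add: field_simps power_add)
    finally show ?case .
  qed
  also have "\<dots> \<le> q^j * A / (1 - q)"
    using q \<open>A \<ge> 0\<close> by (intro divide_right_mono mult_left_le) auto
  finally show ?thesis .
qed

text \<open>The limit is taken pointwise; the uniform tail bound then transfers to the limit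
  through the finite partial sums defining the norm.\<close>
lemma l2_geometric_limit:
  assumes U: "\<And>j. U j \<in> l2" and q: "0 \<le> q" "q < 1"
    and step: "\<And>j. l2norm (\<lambda>n. U (Suc j) n - U j n) \<le> q^j * A"
  obtains u where "u \<in> l2" and "\<And>j. l2norm (\<lambda>n. u n - U j n) \<le> q^j * A / (1 - q)"
proof -
  define D where "D j n = U (Suc j) n - U j n" for j n
  have "summable (\<lambda>j. D j n)" for n
  proof (rule summable_comparison_test)
    show "\<exists>N. \<forall>j\<ge>N. norm (D j n) \<le> q^j * A"
      using norm_le_l2norm[OF l2_diff(1)[OF U U]] step unfolding D_def by (meson order_trans)
    show "summable (\<lambda>j. q^j * A)" using q by (intro summable_mult2 summable_geometric) simp
  qed
  then have "(\<lambda>j. U 0 n + (\<Sum>i<j. D i n)) \<longlonglongrightarrow> U 0 n + (\<Sum>j. D j n)" for n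
    by (intro tendsto_add tendsto_const summable_LIMSEQ)
  moreover have "(\<lambda>j. U 0 n + (\<Sum>i<j. D i n)) = (\<lambda>j. U j n)" for n
    using sum_lessThan_telescope[of "\<lambda>i. U i n"] unfolding D_def by simp
  ultimately have lim: "(\<lambda>j. U j n) \<longlonglongrightarrow> U 0 n + (\<Sum>j. D j n)" for n
    by simp
  define u where "u n = U 0 n + (\<Sum>j. D j n)" for n
  have tail: "L2_set (\<lambda>n. norm (u n - U j n)) F \<le> q^j * A / (1 - q)" if "finite F" for j F
  proof (rule LIMSEQ_le_const2)
    show "(\<lambda>i. L2_set (\<lambda>n. norm (U i n - U j n)) F) \<longlonglongrightarrow> L2_set (\<lambda>n. norm (u n - U j n)) F"
      unfolding L2_set_def u_def by (intro tendsto_intros lim)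
    show "\<exists>N. \<forall>i\<ge>N. L2_set (\<lambda>n. norm (U i n - U j n)) F \<le> q^j * A / (1 - q)"
    proof (intro exI allI impI)
      fix i assume "j \<le> i"
      then obtain m where "i = j + m" using le_Suc_ex by blast
      then show "L2_set (\<lambda>n. norm (U i n - U j n)) F \<le> q^j * A / (1 - q)"
        using L2_set_le_l2norm[OF l2_diff(1)[OF U U] that] l2norm_geometric_tail[OF U q step]
        by (blast intro: order_trans)
    qed
  qed
  have "(\<lambda>n. u n - U 0 n) \<in> l2" by (rule l2_if_L2_set_bounded(1)) (rule tail)
  from l2_add(1)[OF this U[of 0]] have "u \<in> l2" by simp
  moreover have "l2norm (\<lambda>n. u n - U j n) \<le> q^j * A / (1 - q)" for j
    by (rule l2_if_L2_set_bounded(2)) (rule tail)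
  ultimately show thesis by (rule that)
qed

lemma l2norm_iterate_diff_le:
  assumes T_l2: "\<And>u. u \<in> l2 \<Longrightarrow> T u \<in> l2"
    and T_contr: "\<And>u w. u \<in> l2 \<Longrightarrow> w \<in> l2 \<Longrightarrow>
                    l2norm (\<lambda>n. T u n - T w n) \<le> q * l2norm (\<lambda>n. u n - w n)"
    and "0 \<le> q" and "f \<in> l2"
  shows "l2norm (\<lambda>n. (T ^^ Suc j) f n - (T ^^ j) f n) \<le> q^j * l2norm (\<lambda>n. T f n - f n)"
proof (induction j)
  case (Suc j)
  have iterate: "(T ^^ i) f \<in> l2" for i by (induction i) (simp_all add: T_l2 \<open>f \<in> l2\<close>)
  from T_contr[OF iterate[of "Suc j"] iterate[of j]]
  have "l2norm (\<lambda>n. (T ^^ Suc (Suc j)) f n - (T ^^ Suc j) f n)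
      \<le> q * l2norm (\<lambda>n. (T ^^ Suc j) f n - (T ^^ j) f n)" by simp
  also have "\<dots> \<le> q * (q^j * l2norm (\<lambda>n. T f n - f n))" by (rule mult_left_mono[OF Suc \<open>0 \<le> q\<close>])
  finally show ?case by simp
qed simp

lemma l2_contraction_fixpoint:
  assumes T_l2: "\<And>u. u \<in> l2 \<Longrightarrow> T u \<in> l2"
    and T_contr: "\<And>u w. u \<in> l2 \<Longrightarrow> w \<in> l2 \<Longrightarrow>
                    l2norm (\<lambda>n. T u n - T w n) \<le> q * l2norm (\<lambda>n. u n - w n)"
    and q: "0 \<le> q" "q < 1"
  obtains u where "u \<in> l2" and "T u = u"
proof -
  define U where "U j = (T ^^ j) (\<lambda>n. 0)" for j
  have U: "U j \<in> l2" for j unfolding U_def by (induction j) (simp_all add: T_l2 zero_in_l2)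
  define A where "A = l2norm (T (\<lambda>n. 0))"
  have step: "l2norm (\<lambda>n. U (Suc j) n - U j n) \<le> q^j * A" for j
    using l2norm_iterate_diff_le[of T, OF T_l2 T_contr q(1) zero_in_l2, of j]
    by (simp only: U_def A_def diff_zero)
  obtain u where u: "u \<in> l2" and near: "\<And>j. l2norm (\<lambda>n. u n - U j n) \<le> q^j * A / (1 - q)"
    using l2_geometric_limit[of U, OF U q step] by blast
  have "l2norm (\<lambda>n. u n - T u n) \<le> 2 * A / (1 - q) * q^Suc j" for j
  proof -
    have "l2norm (\<lambda>n. u n - T u n) \<le> l2norm (\<lambda>n. u n - U (Suc j) n) + l2norm (\<lambda>n. T (U j) n - T u n)"
      using l2norm_diff_triangle[OF u U[of "Suc j"] T_l2[OF u]] by (simp add: U_def)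
    also have "\<dots> \<le> q^Suc j * A / (1 - q) + q * (q^j * A / (1 - q))"
    proof (rule add_mono)
      have "l2norm (\<lambda>n. T (U j) n - T u n) \<le> q * l2norm (\<lambda>n. u n - U j n)"
        using T_contr[OF U[of j] u] by (simp only: l2norm_diff_commute[of "U j" u])
      also have "\<dots> \<le> q * (q^j * A / (1 - q))" by (rule mult_left_mono[OF near q(1)])
      finally show "l2norm (\<lambda>n. T (U j) n - T u n) \<le> q * (q^j * A / (1 - q))" .
    qed (rule near)
    finally show ?thesis by simp
  qed
  moreover have "(\<lambda>j. 2 * A / (1 - q) * q^Suc j) \<longlonglongrightarrow> 0"
    using q by (intro tendsto_mult_right_zero LIMSEQ_power_zero[THEN LIMSEQ_Suc]) simp
  ultimately have "l2norm (\<lambda>n. u n - T u n) \<le> 0"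
    by (intro LIMSEQ_le_const) auto
  from l2norm_le_0_imp_zero[OF l2_diff(1)[OF u T_l2[OF u]] this] have "T u = u"
    by (simp add: fun_eq_iff)
  with u show thesis by (rule that)
qed

locale l2_contraction =
  fixes K :: "('a \<Rightarrow> complex) \<Rightarrow> 'a \<Rightarrow> complex" and q :: real
  assumes maps_l2: "\<And>u. u \<in> l2 \<Longrightarrow> K u \<in> l2"
    and contracts: "\<And>u w. u \<in> l2 \<Longrightarrow> w \<in> l2 \<Longrightarrow>
                     l2norm (\<lambda>n. K u n - K w n) \<le> q * l2norm (\<lambda>n. u n - w n)"
    and q_nonneg: "0 \<le> q" and q_less_1: "q < 1"
begin

lemma fixpoint_exists:
  assumes f: "f \<in> l2"
  shows "\<exists>u\<in>l2. u = (\<lambda>n. f n + K u n)"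
proof -
  have "(\<lambda>n. f n + K u n) \<in> l2" if "u \<in> l2" for u
    using l2_add(1)[OF f maps_l2[OF that]] .
  moreover have "l2norm (\<lambda>n. (f n + K u n) - (f n + K w n)) \<le> q * l2norm (\<lambda>n. u n - w n)"
    if "u \<in> l2" "w \<in> l2" for u w
    using contracts[OF that] by simp
  ultimately obtain u where u: "u \<in> l2" and fixed: "(\<lambda>n. f n + K u n) = u"
    using l2_contraction_fixpoint[of "\<lambda>u n. f n + K u n"] q_nonneg q_less_1 by blast
  from u fixed[symmetric] show ?thesis by blast
qed

lemma fixpoint_unique:
  assumes "u \<in> l2" "w \<in> l2" "u = (\<lambda>n. f n + K u n)" "w = (\<lambda>n. f n + K w n)"
  shows "u = w"
proof -
  have "u n - w n = K u n - K w n" for n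
    using fun_cong[OF assms(3), of n] fun_cong[OF assms(4), of n] by simp
  then have "(\<lambda>n. u n - w n) = (\<lambda>n. K u n - K w n)" by simp
  with contracts[OF assms(1,2)] have "(1 - q) * l2norm (\<lambda>n. u n - w n) \<le> 0"
    by (simp add: algebra_simps)
  with q_less_1 have "l2norm (\<lambda>n. u n - w n) \<le> 0"
    by (simp add: mult_le_0_iff)
  from l2norm_le_0_imp_zero[OF l2_diff(1)[OF assms(1,2)] this] show "u = w"
    by (simp add: fun_eq_iff)
qed

definition fixpoint :: "('a \<Rightarrow> complex) \<Rightarrow> 'a \<Rightarrow> complex" where
  "fixpoint f = (THE u. u \<in> l2 \<and> u = (\<lambda>n. f n + K u n))"

lemma fixpoint_ex1: "f \<in> l2 \<Longrightarrow> \<exists>!u. u \<in> l2 \<and> u = (\<lambda>n. f n + K u n)"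
  using fixpoint_exists fixpoint_unique by blast

lemma fixpoint_l2: "f \<in> l2 \<Longrightarrow> fixpoint f \<in> l2"
  and fixpoint_eq: "f \<in> l2 \<Longrightarrow> fixpoint f = (\<lambda>n. f n + K (fixpoint f) n)"
  using theI'[OF fixpoint_ex1] unfolding fixpoint_def by blast+

lemma fixpoint_eqI: "f \<in> l2 \<Longrightarrow> u \<in> l2 \<Longrightarrow> u = (\<lambda>n. f n + K u n) \<Longrightarrow> fixpoint f = u"
  unfolding fixpoint_def by (rule the1_equality[OF fixpoint_ex1]) auto

lemma l2norm_fixpoint_le:
  assumes K_bound: "\<And>u. u \<in> l2 \<Longrightarrow> l2norm (K u) \<le> q * l2norm u" and f: "f \<in> l2"
  shows "l2norm (fixpoint f) \<le> l2norm f / (1 - q)"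
proof -
  have "l2norm (fixpoint f) \<le> l2norm f + l2norm (K (fixpoint f))"
    using l2_add(2)[OF f maps_l2[OF fixpoint_l2[OF f]]] fixpoint_eq[OF f] by simp
  also have "\<dots> \<le> l2norm f + q * l2norm (fixpoint f)"
    using K_bound[OF fixpoint_l2[OF f]] by simp
  finally show ?thesis using q_less_1 by (simp add: field_simps)
qed

end

section \<open>Absolute summability of the hopping amplitudes\<close>

lemma summable_powr_stretched_exp:
  assumes "\<kappa> > 0" "\<alpha> > 0"
  shows "summable (\<lambda>j::nat. (real j + 1) powr \<nu> * exp (- \<kappa> * real j powr \<alpha>))"
proof (rule summable_comparison_test_ev)
  show "summable (\<lambda>j::nat. inverse (real j ^ 2))"
    using inverse_power_summable[of 2] by simp
  have "eventually (\<lambda>j::nat. (real j + 1) powr \<nu> * exp (- \<kappa> * real j powr \<alpha>) \<le> inverse (real j ^ 2)) at_top"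
    using assms by real_asymp
  then show "eventually (\<lambda>j. norm ((real j + 1) powr \<nu> * exp (- \<kappa> * real j powr \<alpha>))
      \<le> inverse (real j ^ 2)) sequentially"
    by simp
qed

text \<open>Group the sites into the shells \<open>\<lfloor>nrm n\<rfloor> = j\<close>: the shell \<open>j\<close> has at most
  \<open>C (j + 1)\<^sup>\<nu>\<close> sites, each carrying an amplitude at most \<open>exp (- \<kappa> j\<^sup>\<alpha>)\<close>.\<close>
lemma summable_on_norm_if_stretched_exp_decay:
  fixes nrm :: "'a \<Rightarrow> real" and c :: "'a \<Rightarrow> 'b::real_normed_vector"
  assumes nrm_nonneg: "\<And>m. nrm m \<ge> 0"
    and balls: "\<And>R. R \<ge> 1 \<Longrightarrow> finite {m. nrm m \<le> R} \<and> real (card {m. nrm m \<le> R}) \<le> C * R powr \<nu>"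
    and \<kappa>: "\<kappa> > 0" and \<alpha>: "\<alpha> > 0"
    and decay: "\<And>n. norm (c n) \<le> exp (- \<kappa> * nrm n powr \<alpha>)"
  shows "(\<lambda>n. norm (c n)) summable_on UNIV"
proof (rule nonneg_bdd_above_summable_on)
  define b where "b j = C * (real j + 1) powr \<nu> * exp (- \<kappa> * real j powr \<alpha>)" for j :: nat
  have "real (card {m. nrm m \<le> 1}) \<le> C" using balls[of 1] by simp
  then have "C \<ge> 0" by (meson of_nat_0_le_iff order_trans)
  then have b_nonneg: "b j \<ge> 0" for j unfolding b_def by simp
  have b_summable: "summable b"
    using summable_mult[OF summable_powr_stretched_exp[OF \<kappa> \<alpha>], of C] unfolding b_def
    by (simp add: mult.assoc)
  define shell where "shell n = nat \<lfloor>nrm n\<rfloor>" for n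
  have shell_sum: "(\<Sum>n\<in>{n\<in>F. shell n = j}. norm (c n)) \<le> b j" if "finite F" for F j
  proof -
    have "norm (c n) \<le> exp (- \<kappa> * real j powr \<alpha>)" if "shell n = j" for n
    proof -
      have "real j powr \<alpha> \<le> nrm n powr \<alpha>"
        using that nrm_nonneg[of n] \<alpha> unfolding shell_def by (intro powr_mono2) auto
      with \<kappa> have "- \<kappa> * nrm n powr \<alpha> \<le> - \<kappa> * real j powr \<alpha>" by simp
      then show ?thesis using decay[of n] by (meson exp_le_cancel_iff order_trans)
    qed
    then have "(\<Sum>n\<in>{n\<in>F. shell n = j}. norm (c n))
        \<le> real (card {n\<in>F. shell n = j}) * exp (- \<kappa> * real j powr \<alpha>)"
      by (intro sum_bounded_above) auto
    also have "\<dots> \<le> b j" unfolding b_def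
    proof (rule mult_right_mono)
      have "{n\<in>F. shell n = j} \<subseteq> {m. nrm m \<le> real j + 1}"
        unfolding shell_def using nrm_nonneg by auto
      with balls[of "real j + 1"] show "real (card {n\<in>F. shell n = j}) \<le> C * (real j + 1) powr \<nu>"
        by (meson card_mono le_add_same_cancel2 of_nat_0_le_iff of_nat_le_iff order_trans)
    qed simp
    finally show ?thesis .
  qed
  show "bdd_above (sum (\<lambda>n. norm (c n)) ` {F. F \<subseteq> UNIV \<and> finite F})"
  proof (rule bdd_aboveI2)
    fix F :: "'a set" assume "F \<in> {F. F \<subseteq> UNIV \<and> finite F}"
    then have "finite F" by simp
    then have "(\<Sum>n\<in>F. norm (c n)) = (\<Sum>j\<in>shell ` F. \<Sum>n\<in>{n\<in>F. shell n = j}. norm (c n))"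
      by (rule sum.image_gen)
    also have "\<dots> \<le> (\<Sum>j\<in>shell ` F. b j)" by (intro sum_mono shell_sum \<open>finite F\<close>)
    also have "\<dots> \<le> suminf b" using \<open>finite F\<close> b_nonneg by (intro sum_le_suminf b_summable) auto
    finally show "(\<Sum>n\<in>F. norm (c n)) \<le> suminf b" .
  qed
qed simp

section \<open>The off-diagonal convolution\<close>

lemma sq_le_mult_if_quadratic_bound:
  fixes X S Y :: real
  assumes bound: "\<And>t. t > 0 \<Longrightarrow> 2 * t * X \<le> t^2 * S + Y"
    and "X \<ge> 0" "S \<ge> 0" "Y \<ge> 0"
  shows "X^2 \<le> S * Y"
proof (cases "X = 0")
  case False
  with \<open>X \<ge> 0\<close> have "X > 0" by simp
  show ?thesis
  proof (cases "S = 0")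
    case True
    from bound[of "(Y + 1) / X"] \<open>X > 0\<close> \<open>Y \<ge> 0\<close> True show ?thesis by simp
  next
    case False
    with \<open>S \<ge> 0\<close> have "S > 0" by simp
    from bound[of "X / S"] \<open>X > 0\<close> \<open>S > 0\<close> have "2 * X^2 / S \<le> X^2 / S + Y"
      by (simp add: power2_eq_square)
    with \<open>S > 0\<close> show ?thesis by (simp add: field_simps)
  qed
qed (use assms in simp)

lemma weighted_Cauchy_Schwarz_infsum:
  fixes a b :: "'a \<Rightarrow> real"
  assumes a: "\<And>m. a m \<ge> 0" and b: "\<And>m. b m \<ge> 0"
    and sa: "a summable_on A" and sab: "(\<lambda>m. a m * b m) summable_on A"
    and sabb: "(\<lambda>m. a m * (b m)^2) summable_on A"
  shows "(\<Sum>\<^sub>\<infinity>m\<in>A. a m * b m)^2 \<le> (\<Sum>\<^sub>\<infinity>m\<in>A. a m) * (\<Sum>\<^sub>\<infinity>m\<in>A. a m * (b m)^2)"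
proof (rule sq_le_mult_if_quadratic_bound)
  fix t :: real
  have "2 * t * (\<Sum>\<^sub>\<infinity>m\<in>A. a m * b m) = (\<Sum>\<^sub>\<infinity>m\<in>A. 2 * t * (a m * b m))"
    using sab by (simp add: infsum_cmult_right)
  also have "\<dots> \<le> (\<Sum>\<^sub>\<infinity>m\<in>A. t^2 * a m + a m * (b m)^2)"
  proof (rule infsum_mono)
    fix m
    have "0 \<le> a m * (b m - t)^2" using a by simp
    then show "2 * t * (a m * b m) \<le> t^2 * a m + a m * (b m)^2"
      by (simp add: power2_eq_square algebra_simps)
  qed (intro summable_on_add summable_on_cmult_right sa sab sabb)+
  also have "\<dots> = t^2 * (\<Sum>\<^sub>\<infinity>m\<in>A. a m) + (\<Sum>\<^sub>\<infinity>m\<in>A. a m * (b m)^2)"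
    using sa sabb by (simp add: infsum_add summable_on_cmult_right infsum_cmult_right)
  finally show "2 * t * (\<Sum>\<^sub>\<infinity>m\<in>A. a m * b m) \<le> t^2 * (\<Sum>\<^sub>\<infinity>m\<in>A. a m) + (\<Sum>\<^sub>\<infinity>m\<in>A. a m * (b m)^2)" .
qed (use a b in \<open>auto intro!: infsum_nonneg\<close>)

lemma infsum_sum_swap:
  fixes g :: "'b \<Rightarrow> 'a \<Rightarrow> real"
  assumes "finite F" "\<And>n. n \<in> F \<Longrightarrow> g n summable_on A"
  shows "(\<lambda>m. \<Sum>n\<in>F. g n m) summable_on A"
    and "(\<Sum>\<^sub>\<infinity>m\<in>A. \<Sum>n\<in>F. g n m) = (\<Sum>n\<in>F. \<Sum>\<^sub>\<infinity>m\<in>A. g n m)"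
  using assms by (induction F rule: finite_induct) (auto simp: infsum_add summable_on_add)

definition offdiag_conv :: "('a::ab_group_add \<Rightarrow> complex) \<Rightarrow> ('a \<Rightarrow> complex) \<Rightarrow> 'a \<Rightarrow> complex" where
  "offdiag_conv c f = (\<lambda>n. \<Sum>\<^sub>\<infinity>m\<in>UNIV - {n}. c (n - m) * f m)"

lemma Hop_offdiag_conv: "Hop lam eps c xi k f n = ((xi n + k)^2 / lam) *\<^sub>R f n + (eps / lam) *\<^sub>R offdiag_conv c f n"
  unfolding Hop_def offdiag_conv_def by (simp add: scaleR_conv_of_real)

context
  fixes c :: "'a::ab_group_add \<Rightarrow> complex"
  assumes c_summable: "(\<lambda>d. norm (c d)) summable_on UNIV"
begin

lemma norm_le_infsum_norm: "norm (c d) \<le> (\<Sum>\<^sub>\<infinity>d. norm (c d))"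
  using finite_sum_le_infsum[OF c_summable, of "{d}"] by simp

lemma summable_on_norm_reflect: "(\<lambda>m. norm (c (n - m))) summable_on UNIV"
  and infsum_norm_reflect: "(\<Sum>\<^sub>\<infinity>m. norm (c (n - m))) = (\<Sum>\<^sub>\<infinity>d. norm (c d))"
proof -
  have "bij_betw (\<lambda>m. n - m) UNIV UNIV" by (rule bij_betwI[where g="\<lambda>m. n - m"]) auto
  from summable_on_reindex_bij_betw[OF this, of "\<lambda>d. norm (c d)"] c_summable
  show "(\<lambda>m. norm (c (n - m))) summable_on UNIV" by simp
  from infsum_reindex_bij_betw[OF \<open>bij_betw _ _ _\<close>, of "\<lambda>d. norm (c d)"]
  show "(\<Sum>\<^sub>\<infinity>m. norm (c (n - m))) = (\<Sum>\<^sub>\<infinity>d. norm (c d))" by simp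
qed

context
  fixes f :: "'a \<Rightarrow> complex"
  assumes f: "f \<in> l2"
begin

lemma summable_on_conv_weight_sq: "(\<lambda>m. norm (c (n - m)) * (norm (f m))^2) summable_on UNIV"
proof (rule summable_on_comparison_test)
  show "(\<lambda>m. (\<Sum>\<^sub>\<infinity>d. norm (c d)) * (norm (f m))^2) summable_on UNIV"
    using f unfolding l2_def by (intro summable_on_cmult_right) simp
qed (auto intro: mult_right_mono norm_le_infsum_norm)

text \<open>By AM-GM, \<open>2 \<bar>c\<bar> \<bar>f\<bar> \<le> \<bar>c\<bar> + \<bar>c\<bar> \<bar>f\<bar>\<^sup>2\<close>.\<close>
lemma summable_on_conv_weight: "(\<lambda>m. norm (c (n - m)) * norm (f m)) summable_on UNIV"
proof (rule summable_on_comparison_test)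
  show "(\<lambda>m. 1/2 * (norm (c (n - m)) + norm (c (n - m)) * (norm (f m))^2)) summable_on UNIV"
    by (intro summable_on_cmult_right summable_on_add summable_on_norm_reflect summable_on_conv_weight_sq)
  fix m
  have "0 \<le> norm (c (n - m)) * (norm (f m) - 1)^2" by simp
  then show "norm (c (n - m)) * norm (f m) \<le> 1/2 * (norm (c (n - m)) + norm (c (n - m)) * (norm (f m))^2)"
    by (simp add: power2_eq_square algebra_simps)
qed simp

lemma offdiag_conv_norm_summable: "(\<lambda>m. norm (c (n - m) * f m)) summable_on (UNIV - {n})"
  using summable_on_subset[OF summable_on_conv_weight[of n], of "UNIV - {n}"] by (simp add: norm_mult)

lemma offdiag_conv_summable: "(\<lambda>m. c (n - m) * f m) summable_on (UNIV - {n})"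
  by (rule abs_summable_summable) (rule offdiag_conv_norm_summable)

lemma norm_offdiag_conv_sq_le:
  "(norm (offdiag_conv c f n))^2 \<le> (\<Sum>\<^sub>\<infinity>d. norm (c d)) * (\<Sum>\<^sub>\<infinity>m. norm (c (n - m)) * (norm (f m))^2)"
proof -
  have "norm (offdiag_conv c f n) \<le> (\<Sum>\<^sub>\<infinity>m\<in>UNIV - {n}. norm (c (n - m) * f m))"
    unfolding offdiag_conv_def by (rule norm_infsum_bound) (rule offdiag_conv_norm_summable)
  also have "\<dots> \<le> (\<Sum>\<^sub>\<infinity>m. norm (c (n - m)) * norm (f m))"
    by (rule infsum_mono_neutral[OF offdiag_conv_norm_summable summable_on_conv_weight]) (auto simp: norm_mult)
  finally have "(norm (offdiag_conv c f n))^2 \<le> (\<Sum>\<^sub>\<infinity>m. norm (c (n - m)) * norm (f m))^2"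
    by (simp add: power_mono)
  also have "\<dots> \<le> (\<Sum>\<^sub>\<infinity>m. norm (c (n - m))) * (\<Sum>\<^sub>\<infinity>m. norm (c (n - m)) * (norm (f m))^2)"
    by (intro weighted_Cauchy_Schwarz_infsum summable_on_norm_reflect summable_on_conv_weight
        summable_on_conv_weight_sq) simp_all
  finally show ?thesis by (simp only: infsum_norm_reflect)
qed

text \<open>Schur test: the rows and columns of \<open>c (n - m)\<close> have \<open>\<ell>\<^sup>1\<close>-norm at most \<open>\<Sum> \<bar>c\<bar>\<close>.\<close>
lemma offdiag_conv_l2:
  shows "offdiag_conv c f \<in> l2"
    and "l2norm (offdiag_conv c f) \<le> (\<Sum>\<^sub>\<infinity>d. norm (c d)) * l2norm f"
proof -
  define S where "S = (\<Sum>\<^sub>\<infinity>d. norm (c d))"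
  have "S \<ge> 0" unfolding S_def by (simp add: infsum_nonneg)
  have f_sq: "(\<lambda>m. (norm (f m))^2) summable_on UNIV" using f unfolding l2_def by simp
  have partial_sums: "L2_set (\<lambda>n. norm (offdiag_conv c f n)) F \<le> S * l2norm f" if "finite F" for F
  proof -
    have column: "(\<Sum>n\<in>F. norm (c (n - m))) \<le> S" for m
    proof -
      have "(\<Sum>n\<in>F. norm (c (n - m))) = (\<Sum>d\<in>(\<lambda>n. n - m) ` F. norm (c d))"
        by (rule sum.reindex[symmetric, unfolded o_def]) (auto simp: inj_on_def)
      also have "\<dots> \<le> S" unfolding S_def using \<open>finite F\<close> by (intro finite_sum_le_infsum c_summable) auto
      finally show ?thesis .
    qed
    have "(\<Sum>n\<in>F. (norm (offdiag_conv c f n))^2) \<le> (\<Sum>n\<in>F. S * (\<Sum>\<^sub>\<infinity>m. norm (c (n - m)) * (norm (f m))^2))"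
      unfolding S_def by (intro sum_mono norm_offdiag_conv_sq_le)
    also have "\<dots> = S * (\<Sum>\<^sub>\<infinity>m. \<Sum>n\<in>F. norm (c (n - m)) * (norm (f m))^2)"
      by (simp add: infsum_sum_swap(2)[OF \<open>finite F\<close> summable_on_conv_weight_sq] sum_distrib_left)
    also have "\<dots> \<le> S * (\<Sum>\<^sub>\<infinity>m. S * (norm (f m))^2)"
      using column \<open>S \<ge> 0\<close>
      by (intro mult_left_mono infsum_mono infsum_sum_swap(1)[OF \<open>finite F\<close> summable_on_conv_weight_sq]
          summable_on_cmult_right[OF f_sq]) (simp_all add: mult_right_mono flip: sum_distrib_right)
    also have "\<dots> = (S * l2norm f)^2"
      unfolding l2norm_def using f_sq
      by (simp add: infsum_cmult_right power_mult_distrib power2_eq_square infsum_nonneg)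
    finally show ?thesis
      unfolding L2_set_def using \<open>S \<ge> 0\<close> l2norm_nonneg[of f] by (simp add: real_le_lsqrt)
  qed
  show "offdiag_conv c f \<in> l2" by (rule l2_if_L2_set_bounded(1)) (rule partial_sums)
  show "l2norm (offdiag_conv c f) \<le> S * l2norm f" by (rule l2_if_L2_set_bounded(2)) (rule partial_sums)
qed

end

end

section \<open>The operator domain and translations\<close>

lemma Hdom_iff: "g \<in> Hdom xi k \<longleftrightarrow> g \<in> l2 \<and> (\<lambda>n. (xi n + k)^2 *\<^sub>R g n) \<in> l2"
proof -
  have "(norm ((xi n + k)^2 *\<^sub>R g n))^2 = (xi n + k)^4 * (norm (g n))^2" for n
    by (simp add: power_mult_distrib flip: power_mult)
  then show ?thesis unfolding Hdom_def l2_def by simp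
qed

lemma Hdom_l2: "g \<in> Hdom xi k \<Longrightarrow> g \<in> l2"
  unfolding Hdom_def by simp

lemma Hdom_diff:
  assumes "f \<in> Hdom xi k" "g \<in> Hdom xi k"
  shows "(\<lambda>n. f n - g n) \<in> Hdom xi k"
  using assms l2_diff(1)[of f g] l2_diff(1)[of "\<lambda>n. (xi n + k)^2 *\<^sub>R f n" "\<lambda>n. (xi n + k)^2 *\<^sub>R g n"]
  unfolding Hdom_iff by (simp add: scaleR_diff_right)

lemma Hdom_change_k:
  assumes "g \<in> Hdom xi k"
  shows "g \<in> Hdom xi k'"
proof -
  from assms have g: "g \<in> l2" and gk: "(\<lambda>n. (xi n + k)^2 *\<^sub>R g n) \<in> l2"
    unfolding Hdom_iff by auto
  have "(\<lambda>n. (xi n + k')^2 *\<^sub>R g n) \<in> l2"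
  proof (rule l2_dominated(1)[OF gk g, of 2 "2 * (k' - k)^2"])
    fix n
    have "(xi n + k')^2 \<le> 2 * (xi n + k)^2 + 2 * (k' - k)^2"
      using zero_le_power2[of "(xi n + k) - (k' - k)"] by (simp add: power2_eq_square algebra_simps)
    then show "norm ((xi n + k')^2 *\<^sub>R g n) \<le> 2 * norm ((xi n + k)^2 *\<^sub>R g n) + 2 * (k' - k)^2 * norm (g n)"
      by (simp add: mult_right_mono flip: distrib_right mult.assoc)
  qed simp_all
  with g show ?thesis unfolding Hdom_iff by simp
qed

definition translate :: "'a::ab_group_add \<Rightarrow> ('a \<Rightarrow> 'b) \<Rightarrow> 'a \<Rightarrow> 'b" where
  "translate p f = (\<lambda>n. f (n + p))"

lemma translate_translate_neg: "translate (- p) (translate p f) = f" "translate p (translate (- p) f) = f"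
  unfolding translate_def by auto

lemma translate_delta: "translate (- p) (delta n) = delta (n + p)"
  unfolding translate_def delta_def by (auto simp: algebra_simps)

lemma translate_conj_delta: "translate p (G (translate (- p) (delta n))) m = G (delta (n + p)) (m + p)"
  unfolding translate_delta by (simp add: translate_def)

lemma translate_l2:
  assumes "f \<in> l2"
  shows "translate p f \<in> l2" and "l2norm (translate p f) = l2norm f"
proof -
  have bij: "bij_betw (\<lambda>n. n + p) UNIV UNIV" by (rule bij_betwI[where g="\<lambda>n. n - p"]) auto
  from summable_on_reindex_bij_betw[OF bij, of "\<lambda>n. (norm (f n))^2"] assms
  show "translate p f \<in> l2" unfolding l2_def translate_def by simp
  from infsum_reindex_bij_betw[OF bij, of "\<lambda>n. (norm (f n))^2"]
  show "l2norm (translate p f) = l2norm f" unfolding l2norm_def translate_def by simp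
qed

lemma offdiag_conv_translate: "offdiag_conv c (translate p h) n = offdiag_conv c h (n + p)"
proof -
  have "bij_betw (\<lambda>m. m + p) (UNIV - {n}) (UNIV - {n + p})"
    by (rule bij_betwI[where g="\<lambda>m. m - p"]) auto
  from infsum_reindex_bij_betw[OF this, of "\<lambda>m. c (n + p - m) * h m"] show ?thesis
    unfolding offdiag_conv_def translate_def by simp
qed

lemma abs_sq_diff_le: "\<bar>(x + k)^2 - (x + k')^2\<bar> \<le> \<bar>k - k'\<bar> * (1 + \<bar>k - k'\<bar> + (x + k')^2)"
  for x k k' :: real
proof -
  have factor: "(x + k)^2 - (x + k')^2 = (k - k') * (2 * (x + k') + (k - k'))"
    by (simp add: power2_eq_square algebra_simps)
  have "\<bar>2 * (x + k') + (k - k')\<bar> \<le> 2 * \<bar>x + k'\<bar> + \<bar>k - k'\<bar>"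
    using abs_triangle_ineq[of "2 * (x + k')" "k - k'"] by (simp only: abs_mult abs_numeral)
  also have "2 * \<bar>x + k'\<bar> \<le> 1 + (x + k')^2"
    using zero_le_power2[of "\<bar>x + k'\<bar> - 1"] by (simp add: power2_eq_square algebra_simps)
  finally have "\<bar>2 * (x + k') + (k - k')\<bar> \<le> 1 + \<bar>k - k'\<bar> + (x + k')^2"
    by linarith
  then show ?thesis unfolding factor abs_mult by (intro mult_left_mono) auto
qed

section \<open>Translates under an additive map to the reals\<close>

lemma dense_range_translates:
  fixes xi :: "'a \<Rightarrow> real"
  assumes "closure (range xi) = UNIV"
  obtains p where "(\<lambda>j. \<bar>k - (k0 + xi (p j))\<bar>) \<longlonglongrightarrow> 0"
proof -
  have "k - k0 \<in> closure (range xi)" using assms by simp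
  then obtain x where x: "\<And>j. x j \<in> range xi" and lim: "x \<longlonglongrightarrow> k - k0"
    unfolding closure_sequential by blast
  from x have "\<forall>j. \<exists>a. x j = xi a" by blast
  from choice[OF this] obtain p where "\<forall>j. x j = xi (p j)" by blast
  then have "x = (\<lambda>j. xi (p j))" by auto
  with lim have "(\<lambda>j. k - (k0 + xi (p j))) \<longlonglongrightarrow> k - (k0 + (k - k0))"
    by (intro tendsto_intros) simp
  then show thesis by (intro that tendsto_rabs_zero) simp
qed

text \<open>If the infimum \<open>a\<close> were not attained, there would be two values of \<open>\<bar>\<xi>\<bar>\<close> in
  \<open>(a, 2a)\<close>, and their difference would be a nonzero value of \<open>\<xi>\<close> below \<open>a\<close>.\<close>
lemma additive_inf_abs_attained:
  fixes xi :: "'a::ab_group_add \<Rightarrow> real"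
  assumes xi: "Modules.additive xi" and "a > 0"
    and low: "\<And>m. m \<noteq> 0 \<Longrightarrow> a \<le> \<bar>xi m\<bar>"
    and approx: "\<And>\<epsilon>. \<epsilon> > 0 \<Longrightarrow> \<exists>m. m \<noteq> 0 \<and> \<bar>xi m\<bar> < a + \<epsilon>"
  shows "\<exists>g. xi g = a"
proof -
  interpret additive xi by (rule xi)
  have abs_value: "\<exists>e. xi e = \<bar>xi m\<bar>" for m
    by (cases "xi m \<ge> 0") (auto intro: exI[of _ m] exI[of _ "- m"] simp: minus)
  obtain m1 where m1: "m1 \<noteq> 0" "\<bar>xi m1\<bar> < 2 * a" using approx[OF \<open>a > 0\<close>] by auto
  show ?thesis
  proof (cases "\<bar>xi m1\<bar> = a")
    case True
    then show ?thesis using abs_value[of m1] by auto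
  next
    case False
    with low[OF m1(1)] have "\<bar>xi m1\<bar> - a > 0" by simp
    from approx[OF this] obtain m2 where m2: "m2 \<noteq> 0" "\<bar>xi m2\<bar> < \<bar>xi m1\<bar>" by auto
    obtain e1 e2 where e: "xi e1 = \<bar>xi m1\<bar>" "xi e2 = \<bar>xi m2\<bar>" using abs_value by metis
    with m1(2) m2(2) low[OF m2(1)] have "0 < xi (e1 - e2)" "xi (e1 - e2) < a"
      by (auto simp: diff)
    moreover from this(1) have "e1 - e2 \<noteq> 0" using zero by auto
    ultimately show ?thesis using low[of "e1 - e2"] by simp
  qed
qed

lemma additive_int_multiple:
  fixes xi :: "'a::ab_group_add \<Rightarrow> real"
  assumes xi: "Modules.additive xi" and g: "xi g = a"
  shows "\<exists>p. xi p = of_int j * a"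
proof -
  interpret additive xi by (rule xi)
  have nat_multiple: "\<exists>p. xi p = of_nat i * a" for i
  proof (induction i)
    case 0
    show ?case using zero by auto
  next
    case (Suc i)
    then obtain p where "xi p = of_nat i * a" by blast
    then have "xi (p + g) = of_nat (Suc i) * a" using g by (simp add: add algebra_simps)
    then show ?case by blast
  qed
  show ?thesis
  proof (cases "j \<ge> 0")
    case True
    then show ?thesis using nat_multiple[of "nat j"] by simp
  next
    case False
    obtain p where "xi p = of_nat (nat (- j)) * a" using nat_multiple by blast
    with False have "xi (- p) = of_int j * a" by (simp add: minus)
    then show ?thesis by blast
  qed
qed

lemma additive_translate_into_interval:
  fixes xi :: "'a::ab_group_add \<Rightarrow> real"
  assumes xi: "Modules.additive xi" and g: "xi g = d" and "d > 0"
  shows "\<exists>p. x0 - d / 2 < k + xi p \<and> k + xi p \<le> x0 + d / 2"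
proof -
  define j where "j = \<lfloor>(x0 + d / 2 - k) / d\<rfloor>"
  obtain p where p: "xi p = of_int j * d" using additive_int_multiple[OF xi g] by blast
  have "of_int j \<le> (x0 + d / 2 - k) / d" "(x0 + d / 2 - k) / d < of_int j + 1"
    unfolding j_def by (rule of_int_floor_le, rule real_of_int_floor_add_one_gt)
  with \<open>d > 0\<close> have "of_int j * d \<le> x0 + d / 2 - k" "x0 + d / 2 - k < (of_int j + 1) * d"
    by (simp_all add: le_divide_eq divide_less_eq)
  then show ?thesis using p by (intro exI[of _ p]) (simp add: algebra_simps)
qed

lemma additive_translate_into_window:
  fixes xi :: "'a::ab_group_add \<Rightarrow> real" and \<tau> :: ereal
  assumes xi: "Modules.additive xi" and "\<tau> > 0"
    and \<tau>_inf: "2 * \<tau> = (INF m\<in>{m. m \<noteq> 0}. ereal \<bar>xi m\<bar>)"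
  shows "\<exists>p. k + xi p \<in> {k. ereal x0 - \<tau> < ereal k \<and> ereal k \<le> ereal x0 + \<tau>}"
proof (cases "\<tau> = \<infinity>")
  case True
  then show ?thesis using additive.zero[OF xi] by (intro exI[of _ 0]) simp
next
  case False
  with \<open>\<tau> > 0\<close> obtain t where t: "\<tau> = ereal t" "t > 0" by (cases \<tau>) auto
  with \<tau>_inf have inf: "(INF m\<in>{m. m \<noteq> 0}. ereal \<bar>xi m\<bar>) = ereal (2 * t)" by simp
  have "2 * t \<le> \<bar>xi m\<bar>" if "m \<noteq> 0" for m
    using INF_lower[of m "{m. m \<noteq> 0}" "\<lambda>m. ereal \<bar>xi m\<bar>"] that unfolding inf by simp
  moreover have "\<exists>m. m \<noteq> 0 \<and> \<bar>xi m\<bar> < 2 * t + \<epsilon>" if "\<epsilon> > 0" for \<epsilon>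
  proof -
    have "(INF m\<in>{m. m \<noteq> 0}. ereal \<bar>xi m\<bar>) < ereal (2 * t + \<epsilon>)" unfolding inf using that by simp
    then show ?thesis unfolding INF_less_iff by auto
  qed
  ultimately obtain g where "xi g = 2 * t"
    using additive_inf_abs_attained[OF xi, of "2 * t"] \<open>t > 0\<close> by auto
  from additive_translate_into_interval[OF xi this, of x0 k] \<open>t > 0\<close> show ?thesis
    unfolding t by auto
qed

section \<open>The family \<open>H\<^sub>k\<close> and its resolvents\<close>

locale quasi_periodic_hamiltonian =
  fixes lam eps :: real and c :: "'a::ab_group_add \<Rightarrow> complex" and xi :: "'a \<Rightarrow> real"
  assumes lam_pos: "lam > 0"
    and c_summable: "(\<lambda>d. norm (c d)) summable_on UNIV"
    and xi_additive: "Modules.additive xi" \<comment> \<open>qualified: HOL-Analysis also has \<open>additive\<close> for set functions\<close>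
begin

sublocale xi: additive xi by (rule xi_additive)

abbreviation H :: "real \<Rightarrow> ('a \<Rightarrow> complex) \<Rightarrow> 'a \<Rightarrow> complex" where
  "H k \<equiv> Hop lam eps c xi k"

abbreviation is_resolvent :: "real \<Rightarrow> real \<Rightarrow> (('a \<Rightarrow> complex) \<Rightarrow> 'a \<Rightarrow> complex) \<Rightarrow> bool" where
  "is_resolvent E k G \<equiv> is_inverse_of_EmH lam eps c xi E k G"

definition c_norm :: real where
  "c_norm = (\<Sum>\<^sub>\<infinity>d. norm (c d))"

lemma c_norm_nonneg: "c_norm \<ge> 0"
  unfolding c_norm_def by (simp add: infsum_nonneg)

lemma offdiag_conv_diff:
  assumes "f \<in> l2" "g \<in> l2"
  shows "offdiag_conv c (\<lambda>n. f n - g n) n = offdiag_conv c f n - offdiag_conv c g n"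
proof -
  have "(\<lambda>m. - (c (n - m) * g m)) summable_on UNIV - {n}"
    using offdiag_conv_summable[OF c_summable assms(2)] by (simp add: summable_on_uminus)
  from infsum_add[OF offdiag_conv_summable[OF c_summable assms(1)] this] show ?thesis
    unfolding offdiag_conv_def by (simp add: right_diff_distrib infsum_uminus)
qed

lemma Hop_diff:
  assumes "f \<in> l2" "g \<in> l2"
  shows "H k (\<lambda>n. f n - g n) n = H k f n - H k g n"
  unfolding Hop_offdiag_conv offdiag_conv_diff[OF assms] by (simp add: scaleR_diff_right)

definition pot_diff :: "real \<Rightarrow> real \<Rightarrow> ('a \<Rightarrow> complex) \<Rightarrow> 'a \<Rightarrow> complex" where
  "pot_diff k k' g = (\<lambda>n. (((xi n + k)^2 - (xi n + k')^2) / lam) *\<^sub>R g n)"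

lemma Hop_change_k: "H k g n = H k' g n + pot_diff k k' g n"
  unfolding Hop_offdiag_conv pot_diff_def by (simp add: diff_divide_distrib scaleR_diff_left)

lemma EmH_l2:
  assumes "g \<in> Hdom xi k"
  shows "(\<lambda>n. complex_of_real E * g n - H k g n) \<in> l2"
proof -
  from assms have g: "g \<in> l2" and gk: "(\<lambda>n. (xi n + k)^2 *\<^sub>R g n) \<in> l2"
    unfolding Hdom_iff by auto
  have "(\<lambda>n. E *\<^sub>R g n - ((1 / lam) *\<^sub>R ((xi n + k)^2 *\<^sub>R g n) + (eps / lam) *\<^sub>R offdiag_conv c g n)) \<in> l2"
    by (intro l2_diff(1) l2_add(1) l2_scaleR(1) g gk offdiag_conv_l2(1)[OF c_summable])
  then show ?thesis unfolding Hop_offdiag_conv by (simp add: scaleR_conv_of_real)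
qed

lemma translate_Hdom:
  assumes "g \<in> Hdom xi k"
  shows "translate p g \<in> Hdom xi (k + xi p)"
proof -
  from assms have "g \<in> l2" "(\<lambda>n. (xi n + k)^2 *\<^sub>R g n) \<in> l2"
    unfolding Hdom_iff by auto
  moreover have "translate p (\<lambda>n. (xi n + k)^2 *\<^sub>R g n) = (\<lambda>n. (xi n + (k + xi p))^2 *\<^sub>R translate p g n)"
    unfolding translate_def by (simp add: xi.add algebra_simps)
  ultimately show ?thesis using translate_l2(1) unfolding Hdom_iff by metis
qed

lemma Hop_translate: "H (k + xi p) (translate p h) n = H k h (n + p)"
  unfolding Hop_offdiag_conv offdiag_conv_translate by (simp add: translate_def xi.add algebra_simps)

lemma is_resolventD:
  assumes "is_resolvent E k G"
  shows "\<And>f. f \<in> l2 \<Longrightarrow> G f \<in> Hdom xi k"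
    and "\<And>f. f \<in> l2 \<Longrightarrow> (\<lambda>n. complex_of_real E * G f n - H k (G f) n) = f"
    and "\<And>g. g \<in> Hdom xi k \<Longrightarrow> G (\<lambda>n. complex_of_real E * g n - H k g n) = g"
  using assms unfolding is_inverse_of_EmH_def by auto

lemma is_resolvent_bounded:
  assumes "is_resolvent E k G"
  obtains B where "B \<ge> 0" and "\<And>f. f \<in> l2 \<Longrightarrow> l2norm (G f) \<le> B * l2norm f"
proof -
  from assms obtain B where B: "\<And>f. f \<in> l2 \<Longrightarrow> l2norm (G f) \<le> B * l2norm f"
    unfolding is_inverse_of_EmH_def by blast
  have "B * l2norm f \<le> max B 0 * l2norm f" for f :: "'a \<Rightarrow> complex"
    by (intro mult_right_mono l2norm_nonneg) simp
  with B show thesis by (intro that[of "max B 0"]) (auto intro: order_trans)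
qed

lemma resolvent_diff:
  assumes G: "is_resolvent E k G" and u: "u \<in> l2" and w: "w \<in> l2"
  shows "G (\<lambda>n. u n - w n) = (\<lambda>n. G u n - G w n)"
proof -
  have Gu: "G u \<in> Hdom xi k" and Gw: "G w \<in> Hdom xi k" using is_resolventD(1)[OF G] u w by auto
  have "(\<lambda>n. complex_of_real E * (G u n - G w n) - H k (\<lambda>n. G u n - G w n) n)
      = (\<lambda>n. (complex_of_real E * G u n - H k (G u) n) - (complex_of_real E * G w n - H k (G w) n))"
    unfolding Hop_diff[OF Hdom_l2[OF Gu] Hdom_l2[OF Gw]] by (simp add: algebra_simps)
  also have "\<dots> = (\<lambda>n. u n - w n)"
    using fun_cong[OF is_resolventD(2)[OF G u]] fun_cong[OF is_resolventD(2)[OF G w]] by simp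
  finally show ?thesis
    using is_resolventD(3)[OF G Hdom_diff[OF Gu Gw]] by simp
qed

lemma resolvent_translate:
  assumes G: "is_resolvent E k G" and B: "\<And>f. f \<in> l2 \<Longrightarrow> l2norm (G f) \<le> B * l2norm f"
  shows "is_resolvent E (k + xi p) (\<lambda>f. translate p (G (translate (- p) f)))"
    and "\<And>f. f \<in> l2 \<Longrightarrow> l2norm (translate p (G (translate (- p) f))) \<le> B * l2norm f"
proof -
  let ?G = "\<lambda>f. translate p (G (translate (- p) f))"
  have EmH: "(\<lambda>n. complex_of_real E * translate p g n - H (k + xi p) (translate p g) n)
      = translate p (\<lambda>n. complex_of_real E * g n - H k g n)" for g
    unfolding Hop_translate by (simp add: translate_def)
  have "?G f \<in> Hdom xi (k + xi p)" if "f \<in> l2" for f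
    by (intro translate_Hdom is_resolventD(1)[OF G] translate_l2(1) that)
  moreover have "(\<lambda>n. complex_of_real E * ?G f n - H (k + xi p) (?G f) n) = f" if "f \<in> l2" for f
    unfolding EmH is_resolventD(2)[OF G translate_l2(1)[OF that]] translate_translate_neg ..
  moreover have "?G (\<lambda>n. complex_of_real E * h n - H (k + xi p) h n) = h" if "h \<in> Hdom xi (k + xi p)" for h
  proof -
    have "translate (- p) h \<in> Hdom xi k"
      using translate_Hdom[OF that, of "- p"] by (simp add: xi.minus)
    from is_resolventD(3)[OF G this] show ?thesis
      using EmH[of "translate (- p) h"] by (simp add: translate_translate_neg)
  qed
  moreover show "l2norm (?G f) \<le> B * l2norm f" if "f \<in> l2" for f
  proof -
    have "G (translate (- p) f) \<in> l2"
      by (rule Hdom_l2[OF is_resolventD(1)[OF G translate_l2(1)[OF that]]])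
    then have "l2norm (?G f) = l2norm (G (translate (- p) f))" by (rule translate_l2(2))
    also have "\<dots> \<le> B * l2norm (translate (- p) f)" by (rule B[OF translate_l2(1)[OF that]])
    finally show ?thesis by (simp only: translate_l2(2)[OF that])
  qed
  ultimately show "is_resolvent E (k + xi p) ?G"
    unfolding is_inverse_of_EmH_def by blast
qed

lemma pot_diff_l2:
  assumes "g \<in> Hdom xi k'"
  shows "pot_diff k k' g \<in> l2"
    and "l2norm (pot_diff k k' g)
      \<le> \<bar>k - k'\<bar> / lam * (1 + \<bar>k - k'\<bar>) * l2norm g + \<bar>k - k'\<bar> / lam * l2norm (\<lambda>n. (xi n + k')^2 *\<^sub>R g n)"
proof -
  from assms have g: "g \<in> l2" and gk: "(\<lambda>n. (xi n + k')^2 *\<^sub>R g n) \<in> l2"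
    unfolding Hdom_iff by auto
  define d where "d = \<bar>k - k'\<bar>"
  have "norm (pot_diff k k' g n) \<le> d / lam * (1 + d) * norm (g n) + d / lam * norm ((xi n + k')^2 *\<^sub>R g n)" for n
  proof -
    have "norm (pot_diff k k' g n) = \<bar>(xi n + k)^2 - (xi n + k')^2\<bar> / lam * norm (g n)"
      unfolding pot_diff_def using lam_pos by simp
    also have "\<dots> \<le> d * (1 + d + (xi n + k')^2) / lam * norm (g n)"
      unfolding d_def using lam_pos by (intro mult_right_mono divide_right_mono abs_sq_diff_le) auto
    also have "\<dots> = d / lam * (1 + d) * norm (g n) + d / lam * norm ((xi n + k')^2 *\<^sub>R g n)"
      using lam_pos by (simp add: field_simps)
    finally show ?thesis .
  qed
  from l2_dominated[OF g gk _ _ this] lam_pos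
  show "pot_diff k k' g \<in> l2"
    and "l2norm (pot_diff k k' g)
      \<le> \<bar>k - k'\<bar> / lam * (1 + \<bar>k - k'\<bar>) * l2norm g + \<bar>k - k'\<bar> / lam * l2norm (\<lambda>n. (xi n + k')^2 *\<^sub>R g n)"
    unfolding d_def by auto
qed

definition diag_bound :: "real \<Rightarrow> real \<Rightarrow> real" where
  "diag_bound E B = lam * (\<bar>E\<bar> * B + 1) + \<bar>eps\<bar> * c_norm * B"

text \<open>Read off from \<open>(\<xi> n + k)\<^sup>2 (G u) n = lam (E (G u) n - u n) - eps (offdiag_conv c (G u)) n\<close>.\<close>
lemma l2norm_diag_resolvent:
  assumes G: "is_resolvent E k G" and "B \<ge> 0"
    and B: "\<And>f. f \<in> l2 \<Longrightarrow> l2norm (G f) \<le> B * l2norm f" and u: "u \<in> l2"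
  shows "l2norm (\<lambda>n. (xi n + k)^2 *\<^sub>R G u n) \<le> diag_bound E B * l2norm u"
proof -
  define g where "g = G u"
  have g: "g \<in> l2" unfolding g_def by (rule Hdom_l2[OF is_resolventD(1)[OF G u]])
  define v where "v n = E *\<^sub>R g n - u n" for n
  define w where "w = offdiag_conv c g"
  have v: "v \<in> l2" "l2norm v \<le> \<bar>E\<bar> * l2norm g + l2norm u"
    using l2_diff[OF l2_scaleR(1)[OF g, of E] u] l2_scaleR(2)[OF g, of E] unfolding v_def by linarith+
  have w: "w \<in> l2" "l2norm w \<le> c_norm * l2norm g"
    using offdiag_conv_l2[OF c_summable g] unfolding w_def c_norm_def by auto
  have eq: "(\<lambda>n. (xi n + k)^2 *\<^sub>R g n) = (\<lambda>n. lam *\<^sub>R v n - eps *\<^sub>R w n)"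
  proof
    fix n
    have "u n = complex_of_real E * g n - H k g n"
      using fun_cong[OF is_resolventD(2)[OF G u], of n] unfolding g_def by simp
    then show "(xi n + k)^2 *\<^sub>R g n = lam *\<^sub>R v n - eps *\<^sub>R w n"
      using lam_pos unfolding v_def w_def Hop_offdiag_conv by (simp add: scaleR_conv_of_real field_simps)
  qed
  have "l2norm (\<lambda>n. (xi n + k)^2 *\<^sub>R g n) \<le> lam * l2norm v + \<bar>eps\<bar> * l2norm w"
    unfolding eq
    using l2_diff(2)[OF l2_scaleR(1)[OF v(1), of lam] l2_scaleR(1)[OF w(1), of eps]]
      l2_scaleR(2)[OF v(1), of lam] l2_scaleR(2)[OF w(1), of eps] abs_of_pos[OF lam_pos] by linarith
  also have "\<dots> \<le> lam * (\<bar>E\<bar> * (B * l2norm u) + l2norm u) + \<bar>eps\<bar> * (c_norm * (B * l2norm u))"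
  proof (rule add_mono)
    have gB: "l2norm g \<le> B * l2norm u" unfolding g_def by (rule B[OF u])
    have "l2norm v \<le> \<bar>E\<bar> * (B * l2norm u) + l2norm u"
      using v(2) mult_left_mono[OF gB abs_ge_zero[of E]] by linarith
    then show "lam * l2norm v \<le> lam * (\<bar>E\<bar> * (B * l2norm u) + l2norm u)"
      using lam_pos by (simp add: mult_left_mono)
    have "l2norm w \<le> c_norm * (B * l2norm u)"
      using w(2) mult_left_mono[OF gB c_norm_nonneg] by linarith
    then show "\<bar>eps\<bar> * l2norm w \<le> \<bar>eps\<bar> * (c_norm * (B * l2norm u))"
      by (simp add: mult_left_mono)
  qed
  also have "\<dots> = diag_bound E B * l2norm u"
    unfolding diag_bound_def by (simp add: algebra_simps)
  finally show ?thesis unfolding g_def .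
qed

definition perturbation_factor :: "real \<Rightarrow> real \<Rightarrow> real \<Rightarrow> real" where
  "perturbation_factor E B d = d / lam * ((1 + d) * B + diag_bound E B)"

lemma pot_diff_resolvent_l2:
  assumes G: "is_resolvent E k' G" and "B \<ge> 0"
    and B: "\<And>f. f \<in> l2 \<Longrightarrow> l2norm (G f) \<le> B * l2norm f" and u: "u \<in> l2"
  shows "pot_diff k k' (G u) \<in> l2"
    and "l2norm (pot_diff k k' (G u)) \<le> perturbation_factor E B \<bar>k - k'\<bar> * l2norm u"
proof -
  have Gu: "G u \<in> Hdom xi k'" by (rule is_resolventD(1)[OF G u])
  show "pot_diff k k' (G u) \<in> l2" by (rule pot_diff_l2(1)[OF Gu])
  have "l2norm (pot_diff k k' (G u))
      \<le> \<bar>k - k'\<bar> / lam * (1 + \<bar>k - k'\<bar>) * l2norm (G u) + \<bar>k - k'\<bar> / lam * l2norm (\<lambda>n. (xi n + k')^2 *\<^sub>R G u n)"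
    by (rule pot_diff_l2(2)[OF Gu])
  also have "\<dots> \<le> \<bar>k - k'\<bar> / lam * (1 + \<bar>k - k'\<bar>) * (B * l2norm u) + \<bar>k - k'\<bar> / lam * (diag_bound E B * l2norm u)"
    using lam_pos B[OF u] l2norm_diag_resolvent[OF G \<open>B \<ge> 0\<close> B u]
    by (intro mult_left_mono add_mono) auto
  also have "\<dots> = perturbation_factor E B \<bar>k - k'\<bar> * l2norm u"
    unfolding perturbation_factor_def by (simp only: distrib_left distrib_right mult.assoc)
  finally show "l2norm (pot_diff k k' (G u)) \<le> perturbation_factor E B \<bar>k - k'\<bar> * l2norm u" .
qed

lemma l2_contraction_pot_diff_resolvent:
  assumes G: "is_resolvent E k' G" and "B \<ge> 0"
    and B: "\<And>f. f \<in> l2 \<Longrightarrow> l2norm (G f) \<le> B * l2norm f"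
    and small: "perturbation_factor E B \<bar>k - k'\<bar> < 1"
  shows "l2_contraction (\<lambda>u. pot_diff k k' (G u)) (perturbation_factor E B \<bar>k - k'\<bar>)"
proof
  fix u w :: "'a \<Rightarrow> complex" assume uw: "u \<in> l2" "w \<in> l2"
  have "(\<lambda>n. pot_diff k k' (G u) n - pot_diff k k' (G w) n) = pot_diff k k' (G (\<lambda>n. u n - w n))"
    unfolding pot_diff_def resolvent_diff[OF G uw] by (simp add: scaleR_diff_right)
  then show "l2norm (\<lambda>n. pot_diff k k' (G u) n - pot_diff k k' (G w) n)
      \<le> perturbation_factor E B \<bar>k - k'\<bar> * l2norm (\<lambda>n. u n - w n)"
    using pot_diff_resolvent_l2(2)[OF G \<open>B \<ge> 0\<close> B l2_diff(1)[OF uw]] by simp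
qed (use pot_diff_resolvent_l2(1)[OF G \<open>B \<ge> 0\<close> B] small lam_pos \<open>B \<ge> 0\<close> c_norm_nonneg in
     \<open>auto simp: perturbation_factor_def diag_bound_def\<close>)

text \<open>\<open>(E - H\<^sub>k) G' = I - K\<close> with \<open>K u = pot_diff k k' (G' u)\<close> a contraction, so
  \<open>G' (I - K)\<^sup>-\<^sup>1\<close> inverts \<open>E - H\<^sub>k\<close>.\<close>
lemma resolvent_exists_near:
  assumes G': "is_resolvent E k' G'" and "B \<ge> 0"
    and B: "\<And>f. f \<in> l2 \<Longrightarrow> l2norm (G' f) \<le> B * l2norm f"
    and small: "perturbation_factor E B \<bar>k - k'\<bar> < 1"
  shows "\<exists>G. is_resolvent E k G"
proof -
  define q where "q = perturbation_factor E B \<bar>k - k'\<bar>"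
  define K where "K u = pot_diff k k' (G' u)" for u
  interpret l2_contraction K q
    unfolding K_def q_def by (rule l2_contraction_pot_diff_resolvent[OF G' \<open>B \<ge> 0\<close> B small])
  have K_bound: "l2norm (K u) \<le> q * l2norm u" if "u \<in> l2" for u
    unfolding K_def q_def by (rule pot_diff_resolvent_l2(2)[OF G' \<open>B \<ge> 0\<close> B that])
  define G where "G f = G' (fixpoint f)" for f
  have EmH_G': "complex_of_real E * G' u n - H k (G' u) n = u n - K u n" if "u \<in> l2" for u n
    using fun_cong[OF is_resolventD(2)[OF G' that], of n] by (simp add: Hop_change_k[of k _ _ k'] K_def)
  have "G f \<in> Hdom xi k" if "f \<in> l2" for f
    unfolding G_def by (rule Hdom_change_k[OF is_resolventD(1)[OF G' fixpoint_l2[OF that]]])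
  moreover have "(\<lambda>n. complex_of_real E * G f n - H k (G f) n) = f" if "f \<in> l2" for f
    using fixpoint_eq[OF that] unfolding G_def EmH_G'[OF fixpoint_l2[OF that]]
    by (simp add: fun_eq_iff)
  moreover have "G (\<lambda>n. complex_of_real E * h n - H k h n) = h" if h: "h \<in> Hdom xi k" for h
  proof -
    have h': "h \<in> Hdom xi k'" by (rule Hdom_change_k[OF h])
    define u where "u = (\<lambda>n. complex_of_real E * h n - H k' h n)"
    have u: "u \<in> l2" unfolding u_def by (rule EmH_l2[OF h'])
    have G'u: "G' u = h" unfolding u_def by (rule is_resolventD(3)[OF G' h'])
    have "fixpoint (\<lambda>n. complex_of_real E * h n - H k h n) = u"
      using u G'u by (intro fixpoint_eqI EmH_l2[OF h]) (auto simp: u_def K_def Hop_change_k[of k _ _ k'])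
    then show ?thesis unfolding G_def using G'u by simp
  qed
  moreover have "l2norm (G f) \<le> B / (1 - q) * l2norm f" if "f \<in> l2" for f
  proof -
    have "l2norm (G f) \<le> B * l2norm (fixpoint f)" unfolding G_def by (rule B[OF fixpoint_l2[OF that]])
    also have "\<dots> \<le> B * (l2norm f / (1 - q))"
      using l2norm_fixpoint_le[OF K_bound that] \<open>B \<ge> 0\<close> by (rule mult_left_mono)
    finally show ?thesis by simp
  qed
  ultimately have "is_resolvent E k G" unfolding is_inverse_of_EmH_def by blast
  then show ?thesis by blast
qed

lemma resolvent_identity:
  assumes G: "is_resolvent E k G" and G': "is_resolvent E k' G'" and f: "f \<in> l2"
  shows "G f = (\<lambda>n. G' f n - G' (pot_diff k' k (G f)) n)"
proof -
  have Gf: "G f \<in> Hdom xi k" by (rule is_resolventD(1)[OF G f])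
  have "(\<lambda>n. complex_of_real E * G f n - H k' (G f) n) = (\<lambda>n. f n - pot_diff k' k (G f) n)"
    using fun_cong[OF is_resolventD(2)[OF G f]] by (simp add: Hop_change_k[of k' _ _ k] algebra_simps)
  then have "G f = G' (\<lambda>n. f n - pot_diff k' k (G f) n)"
    using is_resolventD(3)[OF G' Hdom_change_k[OF Gf]] by simp
  also have "\<dots> = (\<lambda>n. G' f n - G' (pot_diff k' k (G f)) n)"
    by (rule resolvent_diff[OF G' f pot_diff_l2(1)[OF Gf]])
  finally show ?thesis .
qed

lemma norm_resolvent_delta_diff_le:
  assumes G: "is_resolvent E k G" and G': "is_resolvent E k' G'"
    and B: "\<And>f. f \<in> l2 \<Longrightarrow> l2norm (G' f) \<le> B * l2norm f"
  shows "norm (G (delta n) m - G' (delta n) m) \<le> B * l2norm (pot_diff k' k (G (delta n)))"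
proof -
  have w: "pot_diff k' k (G (delta n)) \<in> l2"
    by (rule pot_diff_l2(1)[OF is_resolventD(1)[OF G delta_in_l2]])
  have "norm (G (delta n) m - G' (delta n) m) = norm (G' (pot_diff k' k (G (delta n))) m)"
    using fun_cong[OF resolvent_identity[OF G G' delta_in_l2[of n]], of m] by (simp add: norm_minus_commute)
  also have "\<dots> \<le> l2norm (G' (pot_diff k' k (G (delta n))))"
    by (rule norm_le_l2norm[OF Hdom_l2[OF is_resolventD(1)[OF G' w]]])
  also have "\<dots> \<le> B * l2norm (pot_diff k' k (G (delta n)))" by (rule B[OF w])
  finally show ?thesis .
qed

lemma resolvent_exists_if_dense:
  assumes dense: "closure (range xi) = UNIV" and G0: "is_resolvent E k0 G0"
  shows "\<exists>G. is_resolvent E k G"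
proof -
  obtain B where B: "B \<ge> 0" "\<And>f. f \<in> l2 \<Longrightarrow> l2norm (G0 f) \<le> B * l2norm f"
    using is_resolvent_bounded[OF G0] by blast
  obtain p where p: "(\<lambda>j. \<bar>k - (k0 + xi (p j))\<bar>) \<longlonglongrightarrow> 0"
    using dense_range_translates[OF dense] by blast
  define e where "e j = \<bar>k - (k0 + xi (p j))\<bar>" for j
  have "(\<lambda>j. perturbation_factor E B (e j)) \<longlonglongrightarrow> perturbation_factor E B 0"
    unfolding perturbation_factor_def using p lam_pos by (intro tendsto_intros) (simp_all add: e_def)
  then have "eventually (\<lambda>j. perturbation_factor E B (e j) < 1) sequentially"
    by (rule order_tendstoD(2)) (simp add: perturbation_factor_def)
  then obtain j where "perturbation_factor E B \<bar>k - (k0 + xi (p j))\<bar> < 1"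
    by (auto simp: eventually_sequentially e_def)
  then show ?thesis
    using resolvent_exists_near[OF resolvent_translate(1)[OF G0 B(2), where p = "p j"] B(1)
        resolvent_translate(2)[OF G0 B(2), where p = "p j"]] by blast
qed

text \<open>Compare \<open>G\<close> with the translates of \<open>G\<^sub>0\<close>, which satisfy the same bound and sit at
  quasi-momenta converging to \<open>k\<close>.\<close>
lemma resolvent_bound_if_dense:
  assumes dense: "closure (range xi) = UNIV"
    and G0: "is_resolvent E k0 G0" and bound0: "\<And>m n. norm (G0 (delta n) m) \<le> r (m - n)"
    and G: "is_resolvent E k G"
  shows "norm (G (delta n) m) \<le> r (m - n)"
proof -
  obtain B where B: "B \<ge> 0" "\<And>f. f \<in> l2 \<Longrightarrow> l2norm (G0 f) \<le> B * l2norm f"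
    using is_resolvent_bounded[OF G0] by blast
  obtain p where p: "(\<lambda>j. \<bar>k - (k0 + xi (p j))\<bar>) \<longlonglongrightarrow> 0"
    using dense_range_translates[OF dense] by blast
  define e where "e j = \<bar>k - (k0 + xi (p j))\<bar>" for j
  define g where "g = G (delta n)"
  define bound where "bound d = r (m - n)
    + B * (d / lam * (1 + d) * l2norm g + d / lam * l2norm (\<lambda>i. (xi i + k)^2 *\<^sub>R g i))" for d
  have "norm (G (delta n) m) \<le> bound (e j)" for j
  proof -
    let ?G = "\<lambda>f. translate (p j) (G0 (translate (- p j) f))"
    have G': "is_resolvent E (k0 + xi (p j)) ?G" by (rule resolvent_translate(1)[OF G0 B(2)])
    have "norm (?G (delta n) m) \<le> r (m - n)"
      using bound0[of "n + p j" "m + p j"] by (simp add: translate_conj_delta)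
    moreover have "norm (G (delta n) m - ?G (delta n) m) \<le> B * l2norm (pot_diff (k0 + xi (p j)) k g)"
      unfolding g_def by (rule norm_resolvent_delta_diff_le[OF G G' resolvent_translate(2)[OF G0 B(2)]])
    moreover have "l2norm (pot_diff (k0 + xi (p j)) k g)
        \<le> e j / lam * (1 + e j) * l2norm g + e j / lam * l2norm (\<lambda>i. (xi i + k)^2 *\<^sub>R g i)"
      using pot_diff_l2(2)[OF is_resolventD(1)[OF G delta_in_l2], of "k0 + xi (p j)"]
      unfolding g_def e_def by (simp add: abs_minus_commute)
    note mult_left_mono[OF this B(1)]
    moreover have "norm (G (delta n) m) - norm (?G (delta n) m) \<le> norm (G (delta n) m - ?G (delta n) m)"
      by (rule norm_triangle_ineq2)
    ultimately show ?thesis unfolding bound_def by linarith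
  qed
  moreover have "(\<lambda>j. bound (e j)) \<longlonglongrightarrow> bound 0"
    unfolding bound_def using p lam_pos by (intro tendsto_intros) (simp_all add: e_def)
  ultimately show ?thesis
    by (intro LIMSEQ_le_const[of "\<lambda>j. bound (e j)"]) (auto simp: bound_def)
qed

lemma resolvent_exists_if_translates_cover:
  assumes cover: "\<And>k. \<exists>p. k + xi p \<in> J" and inv: "\<forall>k\<in>J. \<exists>G. is_resolvent E k G"
  shows "\<exists>G. is_resolvent E k G"
proof -
  obtain p where "k + xi p \<in> J" using cover by blast
  with inv obtain G1 where G1: "is_resolvent E (k + xi p) G1" by blast
  obtain B where "\<And>f. f \<in> l2 \<Longrightarrow> l2norm (G1 f) \<le> B * l2norm f"
    using is_resolvent_bounded[OF G1] by blast
  from resolvent_translate(1)[OF G1 this, of "- p"] show ?thesis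
    by (auto simp: xi.minus)
qed

lemma resolvent_bound_if_translates_cover:
  assumes cover: "\<And>k. \<exists>p. k + xi p \<in> J"
    and bound: "\<forall>k\<in>J. \<forall>G. is_resolvent E k G \<longrightarrow> (\<forall>m n. norm (G (delta n) m) \<le> r (m - n))"
    and G: "is_resolvent E k G"
  shows "norm (G (delta n) m) \<le> r (m - n)"
proof -
  obtain p where p: "k + xi p \<in> J" using cover by blast
  obtain B where "\<And>f. f \<in> l2 \<Longrightarrow> l2norm (G f) \<le> B * l2norm f"
    using is_resolvent_bounded[OF G] by blast
  from resolvent_translate(1)[OF G this, of p] bound p
  have "norm (translate p (G (translate (- p) (delta (n - p)))) (m - p)) \<le> r ((m - p) - (n - p))"
    by blast
  then show ?thesis by (simp add: translate_conj_delta)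
qed

end

theorem mainTheorem9:
  fixes nrm :: "'a::ab_group_add \<Rightarrow> real"
    and xi :: "'a \<Rightarrow> real"
    and c :: "'a \<Rightarrow> complex"
    and C \<nu> \<kappa>0 \<alpha>0 lam eps E :: real
    and rho :: "real \<Rightarrow> real"
  assumes nrm_nonneg: "\<And>m. nrm m \<ge> 0"
    and nrm_zero: "\<And>m. nrm m = 0 \<longleftrightarrow> m = 0"
    and nrm_triangle: "\<And>m n. nrm (m + n) \<le> nrm m + nrm n"
    and C_gt: "C > 1" and nu_gt: "\<nu> > 1"
    and balls: "\<And>R. R \<ge> 1 \<Longrightarrow> finite {m. nrm m \<le> R} \<and> real (card {m. nrm m \<le> R}) \<le> C * R powr \<nu>"
    and xi_add: "\<And>m n. xi (m + n) = xi m + xi n"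
    and kappa0: "0 < \<kappa>0" "\<kappa>0 \<le> 1"
    and alpha0: "0 < \<alpha>0" "\<alpha>0 \<le> 1"
    and c_decay: "\<And>n. norm (c n) \<le> exp (- \<kappa>0 * nrm n powr \<alpha>0)"
    and c_sym: "\<And>n. c (- n) = cnj (c n)"
    and lam_pos: "lam > 0"
    and rho_nonneg: "\<And>x. x \<ge> 0 \<Longrightarrow> rho x \<ge> 0"
    and rho_l2: "(\<lambda>n. (rho (nrm n))^2) summable_on UNIV"
  shows
   "(closure (range xi) = UNIV \<longrightarrow>
      (\<forall>k0. EmH_invertible lam eps c xi E k0 \<longrightarrow> (\<forall>k. EmH_invertible lam eps c xi E k)) \<and>
      (\<forall>k0. (\<exists>G. is_inverse_of_EmH lam eps c xi E k0 G \<and> inv_bound nrm rho G) \<longrightarrow>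
         (\<forall>k G. is_inverse_of_EmH lam eps c xi E k G \<longrightarrow> inv_bound nrm rho G)))
    \<and>
    (\<forall>(\<tau>0::ereal) m0. \<tau>0 > 0 \<and> 2 * \<tau>0 = (INF m\<in>{m. m \<noteq> 0}. ereal \<bar>xi m\<bar>) \<longrightarrow>
      (let km0 = - xi m0 / 2;
           J = {k. ereal km0 - \<tau>0 < ereal k \<and> ereal k \<le> ereal km0 + \<tau>0}
       in (\<forall>k\<in>J. EmH_invertible lam eps c xi E k) \<longrightarrow>
            (\<forall>k. EmH_invertible lam eps c xi E k) \<and>
            ((\<forall>k\<in>J. \<forall>G. is_inverse_of_EmH lam eps c xi E k G \<longrightarrow> inv_bound nrm rho G) \<longrightarrow>
               (\<forall>k G. is_inverse_of_EmH lam eps c xi E k G \<longrightarrow> inv_bound nrm rho G))))"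
proof -
  have "(\<lambda>d. norm (c d)) summable_on UNIV"
    by (rule summable_on_norm_if_stretched_exp_decay[OF nrm_nonneg balls kappa0(1) alpha0(1) c_decay])
  moreover have xi: "Modules.additive xi" by unfold_locales (rule xi_add)
  ultimately interpret quasi_periodic_hamiltonian lam eps c xi
    using lam_pos xi_add by unfold_locales auto
  let ?J = "\<lambda>x0 \<tau>. {k. ereal x0 - \<tau> < ereal k \<and> ereal k \<le> ereal x0 + \<tau>}"
  let ?r = "\<lambda>d. rho (nrm d)"
  have cover: "\<exists>p. k + xi p \<in> ?J x0 \<tau>"
    if "0 < \<tau> \<and> 2 * \<tau> = (INF m\<in>{m. m \<noteq> 0}. ereal \<bar>xi m\<bar>)" for \<tau> x0 k
    using additive_translate_into_window[OF xi] that by blast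
  show ?thesis
    unfolding EmH_invertible_def inv_bound_def Let_def
  proof (intro conjI impI allI)
    fix \<tau>0 :: ereal and m0 k G m n
    assume "0 < \<tau>0 \<and> 2 * \<tau>0 = (INF m\<in>{m. m \<noteq> 0}. ereal \<bar>xi m\<bar>)"
      and "\<forall>k\<in>?J (- xi m0 / 2) \<tau>0. \<forall>G. is_resolvent E k G \<longrightarrow> (\<forall>m n. norm (G (delta n) m) \<le> ?r (m - n))"
      and "is_resolvent E k G"
    then show "norm (G (delta n) m) \<le> ?r (m - n)"
      by (intro resolvent_bound_if_translates_cover[OF cover])
  qed (auto simp del: numeral_eq_ereal
      intro: resolvent_exists_if_dense resolvent_bound_if_dense[where r = ?r]
        resolvent_exists_if_translates_cover[OF cover])
qed

end
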